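(* Let $N\geq 2$ and let $s_m,\sigma_x,\sigma_r,R_M$ be positive constants. Let $$\mathcal{D}=\{(s,x,y,S,\gamma)\in[s_m,+\infty)\times\mathbb{R}\times\mathbb{R}\times[s_m,+\infty)\times\mathbb{R}_+ \mid s_m<S\leq s_m e^{R_M},\ s_m<s\leq S\}.$$ Let $\mu_0$ be a probability measure on $\mathbb{R}^5$ whose support is included in the interior $\mathring{\mathcal{D}}$ of $\mathcal{D}$. Let $Z_N^0=(s_i^0,x_i,y_i,S_i,\gamma_i)_{1\leq i\leq N}$ be a random variable with distribution $\mu_0^{\otimes N}$ and let $t\mapsto (s_i(t,Z_N^0))_{1\leq i\leq N}$ be the solution on $\mathbb{R}_+$ of the system $$s_i(0)=s_i^0,\qquad \frac{\mathrm{d}s_i(t)}{\mathrm{d}t}=\gamma_i s_i(t)\left(\log\left(\frac{S_i}{s_m}\right)\left(1-\frac{1}{N-1}\sum_{j\neq i}C(s_i(t),s_j(t),|\vec x_i-\vec x_j|)\right)-\log\left(\frac{s_i(t)}{s_m}\right)\right),$$ where $\vec x_i=(x_i,y_i)$ and $C(s_i,s_j,d)=\frac{\log(s_j/s_m)}{2R_M(1+d^2/\sigma_x^2)}\left(1+\tanh\left(\frac{1}{\sigma_r}\log\frac{s_j}{s_i}\right)\right)$. Then almost surely, for all $t\in\mathbb{R}_+$, $(s_i(t,Z_N^0),x_i,y_i,S_i,\gamma_i)_{1\leq i\leq N}\in\mathring{\mathcal{D}}^N$.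
   Context: $|\vec x_i-\vec x_j|$ is the Euclidean distance in $\mathbb{R}^2$. $\mathring{\mathcal{D}}^N$ denotes the $N$-fold product of the interior of $\mathcal{D}$. *)

theory Defs
  imports "HOL-Probability.Probability"
begin

type_synonym pt5 = "real \<times> real \<times> real \<times> real \<times> real"

definition domD :: "real \<Rightarrow> real \<Rightarrow> pt5 set" where
  "domD sm RM = {(s, x, y, S, g). s \<ge> sm \<and> S \<ge> sm \<and> g \<ge> 0 \<and>
      sm < S \<and> S \<le> sm * exp RM \<and> sm < s \<and> s \<le> S}"

definition measure_support :: "'a::topological_space measure \<Rightarrow> 'a set" where
  "measure_support \<mu> = {z. \<forall>U. open U \<longrightarrow> z \<in> U \<longrightarrow> emeasure \<mu> U \<noteq> 0}"

definition Ckern :: "real \<Rightarrow> real \<Rightarrow> real \<Rightarrow> real \<Rightarrow> real \<Rightarrow> real \<Rightarrow> real \<Rightarrow> real" where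
  "Ckern sm sx sr RM si sj d =
     ln (sj / sm) / (2 * RM * (1 + d\<^sup>2 / sx\<^sup>2)) * (1 + tanh ((1 / sr) * ln (sj / si)))"

definition rhs :: "nat \<Rightarrow> real \<Rightarrow> real \<Rightarrow> real \<Rightarrow> real \<Rightarrow> (nat \<Rightarrow> pt5) \<Rightarrow> (nat \<Rightarrow> real) \<Rightarrow> nat \<Rightarrow> real" where
  "rhs N sm sx sr RM z u i =
    (let (s0i, xi, yi, Si, gi) = z i in
     gi * u i * (ln (Si / sm) *
        (1 - (1 / (real N - 1)) *
           (\<Sum>j\<in>{..<N} - {i}. let (s0j, xj, yj, Sj, gj) = z j in
              Ckern sm sx sr RM (u i) (u j) (dist (xi, yi) (xj, yj))))
        - ln (u i / sm)))"

text \<open>sol is a solution on R_+ (= [0,inf)) of the system with data z: the sizes stay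
  positive (domain of the logarithms), start at s_i^0 and satisfy the ODE.\<close>
definition is_solution :: "nat \<Rightarrow> real \<Rightarrow> real \<Rightarrow> real \<Rightarrow> real \<Rightarrow> (nat \<Rightarrow> pt5) \<Rightarrow> (real \<Rightarrow> nat \<Rightarrow> real) \<Rightarrow> bool" where
  "is_solution N sm sx sr RM z sol \<longleftrightarrow>
     (\<forall>i<N. sol 0 i = fst (z i)) \<and>
     (\<forall>t\<ge>0. \<forall>i<N. sol t i > 0) \<and>
     (\<forall>t\<ge>0. \<forall>i<N. ((\<lambda>\<tau>. sol \<tau> i) has_real_derivative rhs N sm sx sr RM z (sol t) i)
                      (at t within {0..}))"

end

theory Submission
  imports Defs
begin

text \<open>Each size s_i can leave the open interval (s_m, S_i) only through an endpoint,
  at a first exit time T. The interaction term is an average of kernel values in [0, 1), and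
  strictly positive once every size exceeds s_m. Hence at T the right-hand side is positive where
  some s_j touches s_m, and negative where s_i touches S_i with all sizes above s_m. In both cases
  the sign of the derivative contradicts the way the boundary was approached from inside. Almost
  surely all initial data lie in the support of mu_0, which is contained in the interior of D.\<close>

lemma AE_in_measure_support:
  fixes \<mu> :: "'a::second_countable_topology measure"
  assumes "sets \<mu> = sets borel"
  shows "AE x in \<mu>. x \<in> measure_support \<mu>"
proof -
  define F where "F = {U. open U \<and> emeasure \<mu> U = 0}"
  obtain F' where F': "F' \<subseteq> F" "countable F'" "\<Union>F' = \<Union>F"
    using Lindelof[of F] unfolding F_def by blast
  have "\<Union>F' \<in> null_sets \<mu>"
  proof (rule null_sets_UN'[where N = id, simplified])
    fix U assume "U \<in> F'"
    then have "open U" "emeasure \<mu> U = 0" using F' unfolding F_def by auto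
    then show "U \<in> null_sets \<mu>" using assms by (auto intro: null_setsI)
  qed fact
  moreover have "{x \<in> space \<mu>. x \<notin> measure_support \<mu>} \<subseteq> \<Union>F'"
    unfolding F'(3) measure_support_def F_def by blast
  ultimately show ?thesis by (rule AE_I')
qed

lemma AE_components_of_product_distributed:
  assumes "prob_space \<mu>" "countable I" "AE x in \<mu>. P x"
    and "Z \<in> measurable M (PiM I (\<lambda>_. \<mu>))" "distr M (PiM I (\<lambda>_. \<mu>)) Z = PiM I (\<lambda>_. \<mu>)"
  shows "AE \<omega> in M. \<forall>i\<in>I. P (Z \<omega> i)"
proof -
  have "AE z in PiM I (\<lambda>_. \<mu>). \<forall>i\<in>I. P (z i)"
    using assms(1-3) by (intro AE_ball_countable'[OF _ assms(2)] AE_PiM_component) auto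
  then have "AE z in distr M (PiM I (\<lambda>_. \<mu>)) Z. \<forall>i\<in>I. P (z i)"
    by (simp only: assms(5))
  then show ?thesis
    by (rule AE_distrD[OF assms(4)])
qed

definition location :: "pt5 \<Rightarrow> real \<times> real" where
  "location p = (case p of (s, x, y, S, g) \<Rightarrow> (x, y))"

definition capacity :: "pt5 \<Rightarrow> real" where
  "capacity p = (case p of (s, x, y, S, g) \<Rightarrow> S)"

definition growth_rate :: "pt5 \<Rightarrow> real" where
  "growth_rate p = (case p of (s, x, y, S, g) \<Rightarrow> g)"

lemma continuous_on_capacity: "continuous_on UNIV capacity"
  unfolding capacity_def case_prod_beta by (intro continuous_on_fst continuous_on_snd continuous_on_id)

lemma continuous_on_growth_rate: "continuous_on UNIV growth_rate"
  unfolding growth_rate_def case_prod_beta by (intro continuous_on_snd continuous_on_id)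

lemma interior_domD:
  "interior (domD sm RM) =
     {p. sm < fst p \<and> fst p < capacity p \<and> capacity p < sm * exp RM \<and> 0 < growth_rate p}"
  (is "_ = ?box")
proof
  have "open ?box"
    using continuous_on_capacity continuous_on_growth_rate
    by (intro open_Collect_conj open_Collect_less continuous_on_fst continuous_on_id continuous_on_const)
  moreover have "?box \<subseteq> domD sm RM"
    by (auto simp: domD_def capacity_def growth_rate_def)
  ultimately show "?box \<subseteq> interior (domD sm RM)"
    by (rule interior_maximal[rotated])
next
  show "interior (domD sm RM) \<subseteq> ?box"
  proof
    fix p assume "p \<in> interior (domD sm RM)"
    obtain s x y S g where p: "p = (s, x, y, S, g)" by (cases p) blast
    obtain e where "e > 0" and e: "ball p e \<subseteq> domD sm RM"
      using \<open>p \<in> interior (domD sm RM)\<close> mem_interior by blast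
    have "(s + e/2, x, y, S, g) \<in> domD sm RM" "(s, x, y, S + e/2, g) \<in> domD sm RM"
      "(s, x, y, S, g - e/2) \<in> domD sm RM"
      using \<open>e > 0\<close> by (intro subsetD[OF e]; simp add: p dist_Pair_Pair dist_real_def)+
    moreover have "p \<in> domD sm RM"
      using \<open>p \<in> interior (domD sm RM)\<close> interior_subset by blast
    ultimately show "p \<in> ?box"
      using \<open>e > 0\<close> unfolding domD_def capacity_def growth_rate_def p by auto
  qed
qed

lemma Ckern_less_one:
  assumes "0 < sm" "0 < RM" "0 < b" "b \<le> sm * exp RM"
  shows "Ckern sm sx sr RM a b d < 1"
proof -
  define den where "den = 2 * RM * (1 + d\<^sup>2 / sx\<^sup>2)"
  define c where "c = 1 + tanh ((1 / sr) * ln (b / a))"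
  have "0 < c" "c < 2"
    unfolding c_def using tanh_real_gt_neg1 tanh_real_lt_1 by (smt (verit))+
  have "b / sm \<le> exp RM"
    using assms by (simp add: divide_le_eq mult.commute)
  then have "ln (b / sm) \<le> RM"
    using assms by (metis ln_exp ln_le_cancel_iff divide_pos_pos exp_gt_zero)
  moreover have "2 * RM \<le> den"
    unfolding den_def using assms(2) by simp
  ultimately have "ln (b / sm) / den \<le> 1 / 2"
    using assms(2) by (simp add: pos_divide_le_eq)
  then have "Ckern sm sx sr RM a b d \<le> 1 / 2 * c"
    unfolding Ckern_def den_def[symmetric] c_def[symmetric]
    using \<open>0 < c\<close> by (intro mult_right_mono) auto
  then show ?thesis using \<open>c < 2\<close> by linarith
qed

lemma Ckern_pos:
  assumes "0 < sm" "0 < RM" "sm < b"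
  shows "0 < Ckern sm sx sr RM a b d"
proof -
  have "0 < 1 + tanh ((1 / sr) * ln (b / a))"
    using tanh_real_gt_neg1 by (smt (verit))
  moreover have "0 < ln (b / sm)"
    using assms by simp
  moreover have "0 < 2 * RM * (1 + d\<^sup>2 / sx\<^sup>2)"
    using assms(2) by (simp add: add_pos_nonneg)
  ultimately show ?thesis unfolding Ckern_def by simp
qed

definition mean_interaction ::
    "nat \<Rightarrow> real \<Rightarrow> real \<Rightarrow> real \<Rightarrow> real \<Rightarrow> (nat \<Rightarrow> pt5) \<Rightarrow> (nat \<Rightarrow> real) \<Rightarrow> nat \<Rightarrow> real" where
  "mean_interaction N sm sx sr RM z u i =
     (\<Sum>j\<in>{..<N} - {i}. Ckern sm sx sr RM (u i) (u j) (dist (location (z i)) (location (z j))))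
       / (real N - 1)"

lemma rhs_eq:
  "rhs N sm sx sr RM z u i = growth_rate (z i) * u i *
     (ln (capacity (z i) / sm) * (1 - mean_interaction N sm sx sr RM z u i) - ln (u i / sm))"
  unfolding rhs_def mean_interaction_def location_def capacity_def growth_rate_def
  by (simp add: Let_def case_prod_beta)

lemma real_card_lessThan_Diff_singleton:
  assumes "i < N"
  shows "real (card ({..<N} - {i})) = real N - 1"
  using assms by (simp add: of_nat_diff)

lemma mean_interaction_less_one:
  assumes "2 \<le> N" "i < N" "0 < sm" "0 < RM" "\<forall>j<N. 0 < u j \<and> u j \<le> sm * exp RM"
  shows "mean_interaction N sm sx sr RM z u i < 1"
proof -
  let ?K = "{..<N} - {i}"
  have "?K \<noteq> {}"
    using assms(1,2) real_card_lessThan_Diff_singleton[OF assms(2)] by force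
  then have "(\<Sum>j\<in>?K. Ckern sm sx sr RM (u i) (u j) (dist (location (z i)) (location (z j))))
      < (\<Sum>j\<in>?K. 1)"
    using assms(3-5) by (intro sum_strict_mono Ckern_less_one) auto
  also have "\<dots> = real N - 1"
    using real_card_lessThan_Diff_singleton[OF assms(2)] by simp
  finally show ?thesis
    using assms(1) unfolding mean_interaction_def by (simp add: divide_less_eq)
qed

lemma mean_interaction_pos:
  assumes "2 \<le> N" "i < N" "0 < sm" "0 < RM" "\<forall>j<N. sm < u j"
  shows "0 < mean_interaction N sm sx sr RM z u i"
proof -
  let ?K = "{..<N} - {i}"
  have "?K \<noteq> {}"
    using assms(1,2) real_card_lessThan_Diff_singleton[OF assms(2)] by force
  then have "0 < (\<Sum>j\<in>?K. Ckern sm sx sr RM (u i) (u j) (dist (location (z i)) (location (z j))))"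
    using assms(3-5) by (intro sum_pos Ckern_pos) auto
  then show ?thesis
    using assms(1) unfolding mean_interaction_def by simp
qed

lemma rhs_pos_at_floor:
  assumes "2 \<le> N" "0 < sm" "0 < RM" "j < N" "u j = sm" "sm < capacity (z j)"
    "0 < growth_rate (z j)" "\<forall>k<N. 0 < u k \<and> u k \<le> sm * exp RM"
  shows "0 < rhs N sm sx sr RM z u j"
proof -
  have "0 < 1 - mean_interaction N sm sx sr RM z u j"
    using mean_interaction_less_one[OF assms(1,4,2,3,8)] by simp
  moreover have "0 < ln (capacity (z j) / sm)"
    using assms(2,6) by simp
  ultimately show ?thesis
    unfolding rhs_eq using assms(2,5,7) by simp
qed

lemma rhs_neg_at_capacity:
  assumes "2 \<le> N" "0 < sm" "0 < RM" "i < N" "u i = capacity (z i)"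
    "0 < growth_rate (z i)" "\<forall>k<N. sm < u k"
  shows "rhs N sm sx sr RM z u i < 0"
proof -
  have "rhs N sm sx sr RM z u i = - (growth_rate (z i) * u i * ln (u i / sm) *
      mean_interaction N sm sx sr RM z u i)"
    unfolding rhs_eq assms(5) by (simp add: algebra_simps)
  moreover have "0 < ln (u i / sm)" "0 < u i"
    using assms(2,4,7) by auto
  ultimately show ?thesis
    using mean_interaction_pos[OF assms(1,4,2,3,7)] assms(6) by simp
qed

lemma first_exit_time:
  fixes f :: "real \<Rightarrow> 'i \<Rightarrow> real"
  assumes "finite I" "\<forall>i\<in>I. continuous_on {0..} (\<lambda>t. f t i)"
    and "\<forall>i\<in>I. lo i < f 0 i \<and> f 0 i < hi i"
    and "0 \<le> t\<^sub>0" "i\<^sub>0 \<in> I" "\<not> (lo i\<^sub>0 < f t\<^sub>0 i\<^sub>0 \<and> f t\<^sub>0 i\<^sub>0 < hi i\<^sub>0)"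
  obtains T where "0 < T" "\<forall>t\<in>{0..<T}. \<forall>i\<in>I. lo i < f t i \<and> f t i < hi i"
    "\<forall>i\<in>I. lo i \<le> f T i \<and> f T i \<le> hi i" "\<exists>i\<in>I. f T i = lo i \<or> f T i = hi i"
proof -
  define B where "B = {t. 0 \<le> t \<and> (\<exists>i\<in>I. f t i \<le> lo i \<or> hi i \<le> f t i)}"
  have B_eq: "B = (\<Union>i\<in>I. {0..} \<inter> (\<lambda>t. f t i) -` ({..lo i} \<union> {hi i..}))"
    unfolding B_def by auto
  have "closed B"
    unfolding B_eq using assms(1,2)
    by (intro closed_UN ballI continuous_closed_preimage closed_Un closed_atMost closed_atLeast) auto
  moreover have "t\<^sub>0 \<in> B"
    using assms(4-6) unfolding B_def by (auto simp: not_less)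
  moreover have "bdd_below B"
    unfolding B_def by (auto intro: bdd_belowI[of _ 0])
  ultimately have "Inf B \<in> B"
    by (intro closed_contains_Inf) auto
  define T where "T = Inf B"
  have "T \<in> B"
    using \<open>Inf B \<in> B\<close> unfolding T_def .
  have inside: "\<forall>t\<in>{0..<T}. \<forall>i\<in>I. lo i < f t i \<and> f t i < hi i"
    using cInf_lower[OF _ \<open>bdd_below B\<close>] unfolding T_def B_def by force
  have "0 < T"
    using \<open>T \<in> B\<close> assms(3) unfolding B_def by (force simp: le_less)
  have "lo i \<le> f T i \<and> f T i \<le> hi i" if "i \<in> I" for i
  proof -
    have "closed ({0..} \<inter> (\<lambda>t. f t i) -` {lo i..hi i})"
      using assms(2) that by (intro continuous_closed_preimage) auto
    moreover have "{0..<T} \<subseteq> {0..} \<inter> (\<lambda>t. f t i) -` {lo i..hi i}"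
      using inside that by fastforce
    ultimately have "closure {0..<T} \<subseteq> {0..} \<inter> (\<lambda>t. f t i) -` {lo i..hi i}"
      by (rule closure_minimal[rotated])
    moreover have "T \<in> closure {0..<T}"
      using \<open>0 < T\<close> by simp
    ultimately show ?thesis
      by auto
  qed
  moreover have "\<exists>i\<in>I. f T i = lo i \<or> f T i = hi i"
    using \<open>T \<in> B\<close> calculation unfolding B_def by force
  ultimately show ?thesis
    using that \<open>0 < T\<close> inside by blast
qed

lemma has_real_derivative_nonpos_if_above_before:
  assumes "(f has_real_derivative D) (at T within {a..})" "a < T" "\<forall>t\<in>{a..<T}. f T < f t"
  shows "D \<le> 0"
proof (rule ccontr)
  assume "\<not> D \<le> 0"
  then obtain d where "d > 0" and d: "\<forall>h>0. T - h \<in> {a..} \<longrightarrow> h < d \<longrightarrow> f (T - h) < f T"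
    using has_real_derivative_pos_inc_left[OF assms(1)] by force
  define m where "m = min d (T - a)"
  have "0 < m" "m \<le> d" "m \<le> T - a"
    using \<open>d > 0\<close> assms(2) unfolding m_def by auto
  then have "0 < m / 2" "m / 2 < d" and before: "T - m / 2 \<in> {a..<T}"
    by auto
  then have "f (T - m / 2) < f T"
    using d by auto
  moreover have "f T < f (T - m / 2)"
    using assms(3) before by blast
  ultimately show False
    by simp
qed

lemma has_real_derivative_nonneg_if_below_before:
  assumes "(f has_real_derivative D) (at T within {a..})" "a < T" "\<forall>t\<in>{a..<T}. f t < f T"
  shows "0 \<le> D"
  using has_real_derivative_nonpos_if_above_before[OF DERIV_minus[OF assms(1)] assms(2)] assms(3)
  by simp

lemma solution_between_floor_and_capacity:
  assumes "2 \<le> N" "0 < sm" "0 < RM"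
    and data: "\<forall>i<N. z i \<in> interior (domD sm RM)"
    and sol: "is_solution N sm sx sr RM z sol"
    and "0 \<le> t" "i < N"
  shows "sm < sol t i \<and> sol t i < capacity (z i)"
proof (rule ccontr)
  have z: "sm < fst (z j)" "fst (z j) < capacity (z j)" "capacity (z j) < sm * exp RM"
    "0 < growth_rate (z j)" if "j < N" for j
    using data that by (auto simp: interior_domD)
  have der: "((\<lambda>\<tau>. sol \<tau> j) has_real_derivative rhs N sm sx sr RM z (sol t) j) (at t within {0..})"
    if "0 \<le> t" "j < N" for t j
    using sol that unfolding is_solution_def by blast
  then have "\<forall>j\<in>{..<N}. continuous_on {0..} (\<lambda>\<tau>. sol \<tau> j)"
    by (auto simp: continuous_on_eq_continuous_within intro: DERIV_continuous)
  moreover have "\<forall>j\<in>{..<N}. sm < sol 0 j \<and> sol 0 j < capacity (z j)"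
    using sol z unfolding is_solution_def by auto
  moreover assume "\<not> (sm < sol t i \<and> sol t i < capacity (z i))"
  ultimately obtain T where "0 < T"
    and inside: "\<forall>\<tau>\<in>{0..<T}. \<forall>j\<in>{..<N}. sm < sol \<tau> j \<and> sol \<tau> j < capacity (z j)"
    and at_T: "\<forall>j\<in>{..<N}. sm \<le> sol T j \<and> sol T j \<le> capacity (z j)"
    and exit: "\<exists>j\<in>{..<N}. sol T j = sm \<or> sol T j = capacity (z j)"
    using first_exit_time[of "{..<N}" sol "\<lambda>_. sm" "\<lambda>j. capacity (z j)" t i] assms(6,7) by blast
  consider (floor) j where "j < N" "sol T j = sm"
    | (capacity) k where "k < N" "sol T k = capacity (z k)" "\<forall>j<N. sm < sol T j"
    using at_T exit by (metis lessThan_iff order_le_less)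
  then show False
  proof cases
    case floor
    have "\<forall>k<N. 0 < sol T k \<and> sol T k \<le> sm * exp RM"
    proof (intro allI impI)
      fix k assume "k < N"
      then have "sm \<le> sol T k" "sol T k \<le> capacity (z k)"
        using at_T by auto
      then show "0 < sol T k \<and> sol T k \<le> sm * exp RM"
        using z(3)[OF \<open>k < N\<close>] assms(2) by linarith
    qed
    moreover have "sm < capacity (z j)"
      using z(1,2)[OF floor(1)] by linarith
    ultimately have "0 < rhs N sm sx sr RM z (sol T) j"
      using rhs_pos_at_floor[where u = "sol T" and z = z and sx = sx and sr = sr, OF assms(1-3) floor]
        z(4)[OF floor(1)]
      by blast
    moreover have "rhs N sm sx sr RM z (sol T) j \<le> 0"
      using inside floor \<open>0 < T\<close>
      by (intro has_real_derivative_nonpos_if_above_before[OF der]) auto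
    ultimately show False by simp
  next
    case capacity
    have "rhs N sm sx sr RM z (sol T) k < 0"
      using capacity z(4)[OF capacity(1)]
      by (intro rhs_neg_at_capacity[where u = "sol T" and z = z and sx = sx and sr = sr] assms(1-3))
    moreover have "0 \<le> rhs N sm sx sr RM z (sol T) k"
      using inside capacity \<open>0 < T\<close>
      by (intro has_real_derivative_nonneg_if_below_before[OF der]) auto
    ultimately show False by simp
  qed
qed

theorem proposition2:
  fixes N :: nat and sm sx sr RM :: real
    and \<mu>0 :: "pt5 measure" and M :: "'w measure" and Z :: "'w \<Rightarrow> nat \<Rightarrow> pt5"
  assumes "N \<ge> 2" and "sm > 0" and "sx > 0" and "sr > 0" and "RM > 0"
    and "prob_space \<mu>0" and "sets \<mu>0 = sets borel"
    and "measure_support \<mu>0 \<subseteq> interior (domD sm RM)"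
    and "prob_space M"
    and "Z \<in> measurable M (PiM {..<N} (\<lambda>_. \<mu>0))"
    and "distr M (PiM {..<N} (\<lambda>_. \<mu>0)) Z = PiM {..<N} (\<lambda>_. \<mu>0)"
  shows "AE \<omega> in M. \<forall>sol. is_solution N sm sx sr RM (Z \<omega>) sol \<longrightarrow>
           (\<forall>t\<ge>0. \<forall>i<N. (case Z \<omega> i of (s0, x, y, S, g) \<Rightarrow> (sol t i, x, y, S, g))
                            \<in> interior (domD sm RM))"
proof -
  have "AE \<omega> in M. \<forall>i\<in>{..<N}. Z \<omega> i \<in> measure_support \<mu>0"
    using AE_in_measure_support[OF assms(7)] assms(6,10,11)
    by (intro AE_components_of_product_distributed) auto
  then show ?thesis
  proof (rule eventually_mono, intro allI impI)
    fix \<omega> sol and t :: real and i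
    assume "\<forall>i\<in>{..<N}. Z \<omega> i \<in> measure_support \<mu>0" and "is_solution N sm sx sr RM (Z \<omega>) sol"
      and "0 \<le> t" "i < N"
    moreover from this have data: "\<forall>j<N. Z \<omega> j \<in> interior (domD sm RM)"
      using assms(8) by blast
    ultimately have "sm < sol t i \<and> sol t i < capacity (Z \<omega> i)"
      using solution_between_floor_and_capacity[OF assms(1,2,5) data] by blast
    then show "(case Z \<omega> i of (s0, x, y, S, g) \<Rightarrow> (sol t i, x, y, S, g)) \<in> interior (domD sm RM)"
      using data \<open>i < N\<close>
      by (cases "Z \<omega> i") (auto simp: interior_domD capacity_def growth_rate_def)
  qed
qed

end
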